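(* Let $\Gamma=(V,E)$ be a connected locally finite graph with root $o$, let $\lambda>1$, and let $(Z_n)$ be the $\lambda$-homesick random walk on $(\Gamma,o)$, assumed recurrent. Let $\rho_0=0$ and $\rho_k=\inf\{n>\rho_{k-1}:Z_n=o\}$. Then for every $0<c<1$ and every integer $k\ge\left(\frac{5(\lambda-1)}{\deg o}\right)^{1/c}$, \[\Pr\Big(|\mathrm{range}(Z_{\rho_k})|\le\frac N4\Big)\le e^{-N/8},\qquad\text{where } N=\min\Big\{\big|B_{\frac{c\log k}{\log\lambda}}\big|,\Big\lfloor\frac{\lambda-1}{\deg o}k^{1-c}\Big\rfloor\Big\}.\]
   Context: The $\lambda$-homesick random walk on $(\Gamma,o)$: $Z_0=o$; from a vertex $v$, letting $v_1,\dots,v_j$ be the neighbors with $\mathrm{dist}(o,v_i)=\mathrm{dist}(o,v)-1$ and $v'_1,\dots,v'_k$ the other neighbors, the walk moves to each $v_i$ with probability $\frac{\lambda}{\lambda j+k}$ and to each $v'_i$ with probability $\frac{1}{\lambda j+k}$. $B_r=\{v\in V:\mathrm{dist}(o,v)\le r\}$ for real $r\ge0$ (so $B_r=B_{\lfloor r\rfloor}$). $\mathrm{range}(Z_n)=\{Z_0,\dots,Z_n\}$. *)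

theory Defs
  imports "HOL-Probability.Probability"
begin

text \<open>A graph is given by an adjacency relation on the vertex type 'a
  (all elements of 'a are vertices).\<close>

definition simple_graph :: "('a \<Rightarrow> 'a \<Rightarrow> bool) \<Rightarrow> bool" where
  "simple_graph adj \<longleftrightarrow> (\<forall>v w. adj v w \<longrightarrow> adj w v) \<and> (\<forall>v. \<not> adj v v)"

definition locally_finite :: "('a \<Rightarrow> 'a \<Rightarrow> bool) \<Rightarrow> bool" where
  "locally_finite adj \<longleftrightarrow> (\<forall>v. finite {w. adj v w})"

definition graph_connected :: "('a \<Rightarrow> 'a \<Rightarrow> bool) \<Rightarrow> bool" where
  "graph_connected adj \<longleftrightarrow> (\<forall>v w. adj\<^sup>*\<^sup>* v w)"

definition gdeg :: "('a \<Rightarrow> 'a \<Rightarrow> bool) \<Rightarrow> 'a \<Rightarrow> nat" where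
  "gdeg adj v = card {w. adj v w}"

definition gdist :: "('a \<Rightarrow> 'a \<Rightarrow> bool) \<Rightarrow> 'a \<Rightarrow> 'a \<Rightarrow> nat" where
  "gdist adj v w = (LEAST n. (adj ^^ n) v w)"

definition ball_graph :: "('a \<Rightarrow> 'a \<Rightarrow> bool) \<Rightarrow> 'a \<Rightarrow> real \<Rightarrow> 'a set" where
  "ball_graph adj o' r = {v. real (gdist adj o' v) \<le> r}"

definition homesick_p :: "('a \<Rightarrow> 'a \<Rightarrow> bool) \<Rightarrow> 'a \<Rightarrow> real \<Rightarrow> 'a \<Rightarrow> 'a \<Rightarrow> real" where
  "homesick_p adj o' lam v w =
     (let down = {u. adj v u \<and> gdist adj o' u + 1 = gdist adj o' v};
          j = card down;
          k = card {u. adj v u} - j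
      in if adj v w then (if w \<in> down then lam else 1) / (lam * real j + real k) else 0)"

text \<open>Z is (a realisation of) the lambda-homesick random walk on (adj,o) on the
  probability space M: Z_0 = o and the finite-dimensional distributions are
  those of the Markov chain with transition probabilities homesick_p.\<close>
definition is_homesick_walk ::
  "'w measure \<Rightarrow> ('a \<Rightarrow> 'a \<Rightarrow> bool) \<Rightarrow> 'a \<Rightarrow> real \<Rightarrow> (nat \<Rightarrow> 'w \<Rightarrow> 'a) \<Rightarrow> bool" where
  "is_homesick_walk M adj o' lam Z \<longleftrightarrow>
     prob_space M \<and>
     (\<forall>i. Z i \<in> measurable M (count_space UNIV)) \<and>
     (\<forall>n (f :: nat \<Rightarrow> 'a).
        measure M {\<omega> \<in> space M. \<forall>i\<le>n. Z i \<omega> = f i} =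
          (if f 0 = o' then (\<Prod>i<n. homesick_p adj o' lam (f i) (f (Suc i))) else 0))"

text \<open>Successive return times to o: rho_0 = 0, rho_(k+1) = inf{n > rho_k. Z_n = o}.
  (On the null set where a return fails to happen the value is irrelevant.)\<close>
fun return_time :: "(nat \<Rightarrow> 'a) \<Rightarrow> 'a \<Rightarrow> nat \<Rightarrow> nat" where
  "return_time z o' 0 = 0"
| "return_time z o' (Suc k) = (LEAST n. n > return_time z o' k \<and> z n = o')"

end

theory Submission
  imports Defs
begin

text \<open>
  The homesick walk is reversible: with the weight mu v = (lam j + k) / lam ^ depth v, where
  j and k count the neighbours of v towards and away from the root, one has
  mu v * p v w = lam ^ - min (depth v) (depth w) on every edge. Reversibility, a triangle
  inequality for Green functions and the bound 1 / p y z on the Green function at y of the walk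
  killed at a neighbour z show that before hitting a vertex u the walk returns to o at most
  deg o * lam ^ depth u / (lam - 1) times in expectation. By renewal, every excursion from o
  therefore visits u with probability at least q = (lam - 1) / (deg o * lam ^ r) when
  depth u \<le> r. As long as the range has at most N / 4 < card B_r vertices, such a u is
  unvisited, so each excursion enlarges the range with probability at least q, and
  2 powr (N / 4 - size of the range) * (1 - q / 2) ^ (excursions still to come) is a
  supermartingale along excursions. Hence the range after k excursions is at most N / 4 with
  probability at most 2 powr (N / 4 - 1) * (1 - q / 2) ^ k \<le> exp (- N / 8), since k q \<ge> N.

  The walk is only given through its finite-dimensional distributions, so all estimates are
  proved for weighted sums over finite paths and transferred to M through cylinder sets.
\<close>

definition excursion :: "'a \<Rightarrow> 'a list \<Rightarrow> bool" where
  "excursion x e \<longleftrightarrow> 2 \<le> length e \<and> hd e = x \<and> last e = x \<and> x \<notin> set (butlast (tl e))"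

fun excursions :: "'a \<Rightarrow> nat \<Rightarrow> 'a list \<Rightarrow> bool" where
  "excursions x 0 g \<longleftrightarrow> g = [x]"
| "excursions x (Suc j) g \<longleftrightarrow> (\<exists>r e. excursions x j r \<and> excursion x e \<and> g = butlast r @ e)"

lemma excursion_hd_last: "excursion x e \<Longrightarrow> e \<noteq> [] \<and> hd e = x \<and> last e = x"
  unfolding excursion_def by auto

lemma excursions_hd_last: "excursions x j g \<Longrightarrow> g \<noteq> [] \<and> hd g = x \<and> last g = x"
proof (induction j arbitrary: g)
  case (Suc j)
  then obtain r e where r: "excursions x j r" and e: "excursion x e" and g: "g = butlast r @ e"
    by auto
  have "r \<noteq> []" "hd r = x" using Suc.IH[OF r] by auto
  then have "hd (butlast r @ e) = x"
    using excursion_hd_last[OF e] by (cases r rule: rev_cases) (auto simp: hd_append)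
  then show ?case using g excursion_hd_last[OF e] by simp
qed simp

lemma excursions_Suc_0: "excursions x (Suc 0) e \<longleftrightarrow> excursion x e"
  by auto

lemma set_butlast_append:
  assumes "r \<noteq> []" "e \<noteq> []" "last r = hd e"
  shows "set (butlast r @ e) = set r \<union> set e"
proof -
  have "set r = set (butlast r) \<union> {last r}"
    using assms(1) by (metis append_butlast_last_id set_append empty_set list.simps(15))
  then show ?thesis using assms(2,3) by auto
qed

lemma take_drop_butlast_append:
  assumes "r \<noteq> []" "last r = hd e" "e \<noteq> []"
  shows "take (length r) (butlast r @ e) = r" and "drop (length r - 1) (butlast r @ e) = e"
proof -
  show "take (length r) (butlast r @ e) = r"
    using assms by (cases r rule: rev_cases; cases e) auto
  show "drop (length r - 1) (butlast r @ e) = e" by simp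
qed

lemma excursion_prefix:
  assumes "2 \<le> length g" "hd g = x" "last g = x"
  shows "\<exists>i. 0 < i \<and> i < length g \<and> g ! i = x \<and> excursion x (take (Suc i) g)"
proof -
  obtain t where g: "g = x # t" using assms(1,2) by (cases g) auto
  with assms have "t \<noteq> []" by auto
  with g have "x \<in> set t" using assms(3) last_in_set by fastforce
  then obtain ys zs where t: "t = ys @ x # zs" "x \<notin> set ys" using split_list_first by metis
  show ?thesis
    by (intro exI[of _ "Suc (length ys)"]) (simp add: g t excursion_def)
qed

lemma return_time_Suc_excursion:
  assumes t: "return_time z x j = t" and e: "excursion x e"
    and z: "\<And>i. i < length e \<Longrightarrow> z (t + i) = e ! i"
  shows "return_time z x (Suc j) = t + (length e - 1)"
proof -
  have e2: "2 \<le> length e" and last_e: "last e = x" and inner: "x \<notin> set (butlast (tl e))"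
    using e unfolding excursion_def by auto
  show ?thesis
    unfolding return_time.simps t
  proof (rule Least_equality)
    have "z (t + (length e - 1)) = e ! (length e - 1)"
      by (rule z) (use e2 in linarith)
    also have "\<dots> = last e"
      using e2 by (subst last_conv_nth) auto
    finally show "t < t + (length e - 1) \<and> z (t + (length e - 1)) = x" using e2 last_e by simp
  next
    fix n assume n: "t < n \<and> z n = x"
    show "t + (length e - 1) \<le> n"
    proof (rule ccontr)
      assume "\<not> ?thesis"
      then have i: "0 < n - t" "n - t < length e - 1" using n by auto
      have "butlast (tl e) ! (n - t - 1) = e ! (n - t)"
        using i e2 by (cases e) (auto simp: nth_butlast)
      moreover have "n - t - 1 < length (butlast (tl e))" using i by simp
      then have "butlast (tl e) ! (n - t - 1) \<in> set (butlast (tl e))" by (rule nth_mem)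
      ultimately have "z n \<in> set (butlast (tl e))" using z[of "n - t"] i n by simp
      then show False using n inner by simp
    qed
  qed
qed

lemma return_time_excursions:
  assumes "excursions x j r" and "\<And>i. i < length r \<Longrightarrow> z i = r ! i"
  shows "return_time z x j = length r - 1"
  using assms
proof (induction j arbitrary: r)
  case (Suc j)
  then obtain r' e where r': "excursions x j r'" and e: "excursion x e" and r: "r = butlast r' @ e"
    by auto
  have r'_props: "r' \<noteq> []" "last r' = x" using excursions_hd_last[OF r'] by auto
  have e_props: "e \<noteq> []" "hd e = x" using excursion_hd_last[OF e] by auto
  let ?t = "length r' - 1"
  have z_e: "z (?t + i) = e ! i" if "i < length e" for i
    using Suc.prems(2)[of "?t + i"] that by (simp add: r nth_append)
  have "z i = r' ! i" if "i < length r'" for i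
  proof (cases "i < ?t")
    case True
    then show ?thesis using Suc.prems(2)[of i] by (simp add: r nth_append nth_butlast)
  next
    case False
    then have "i = ?t" using that by simp
    then show ?thesis using z_e[of 0] e_props r'_props
      by (simp add: hd_conv_nth last_conv_nth)
  qed
  then have "return_time z x j = ?t" using Suc.IH[OF r'] by simp
  then have "return_time z x (Suc j) = ?t + (length e - 1)"
    by (rule return_time_Suc_excursion[OF _ e z_e])
  then show ?case using e_props by (cases e) (simp_all add: r)
qed simp

text \<open>Injective because the j-th return time locates the end of the j-th excursion.\<close>
lemma inj_on_excursions_append:
  assumes A: "\<And>a. a \<in> A \<Longrightarrow> excursions x j a"
    and B: "\<And>a b. a \<in> A \<Longrightarrow> b \<in> B a \<Longrightarrow> b \<noteq> [] \<and> hd b = x"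
  shows "inj_on (\<lambda>(a, b). butlast a @ b) (Sigma A B)"
proof (rule inj_onI, clarify)
  have return: "return_time (\<lambda>i. (butlast a @ b) ! i) x j = length a - 1"
    if "a \<in> A" "b \<in> B a" for a b
  proof (rule return_time_excursions[OF A[OF that(1)]])
    fix i assume i: "i < length a"
    have a: "a \<noteq> []" "last a = x" and b: "b \<noteq> []" "hd b = x"
      using excursions_hd_last[OF A[OF that(1)]] B[OF that] by auto
    show "(butlast a @ b) ! i = a ! i"
    proof (cases "i < length a - 1")
      case False
      then have "i = length a - 1" using i by linarith
      then show ?thesis using a b by (simp add: nth_append last_conv_nth hd_conv_nth)
    qed (simp add: nth_append nth_butlast)
  qed
  fix a b a' b'
  assume ab: "a \<in> A" "b \<in> B a" "a' \<in> A" "b' \<in> B a'" and eq: "butlast a @ b = butlast a' @ b'"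
  have "length (butlast a) = length (butlast a')"
    using return[OF ab(1,2)] return[OF ab(3,4)] eq by simp
  then have "butlast a = butlast a'" "b = b'" using eq by auto
  moreover have "last a = last a'"
    using excursions_hd_last[OF A[OF ab(1)]] excursions_hd_last[OF A[OF ab(3)]] by simp
  ultimately show "a = a' \<and> b = b'"
    using excursions_hd_last[OF A[OF ab(1)]] excursions_hd_last[OF A[OF ab(3)]]
    by (metis append_butlast_last_id)
qed

locale graph_chain =
  fixes adj :: "'a \<Rightarrow> 'a \<Rightarrow> bool" and p :: "'a \<Rightarrow> 'a \<Rightarrow> real"
  assumes simple: "simple_graph adj" and loc_fin: "locally_finite adj"
    and p_nonneg: "p v w \<ge> 0"
    and p_pos: "adj v w \<Longrightarrow> p v w > 0"
    and p_sum: "(\<Sum>w | adj v w. p v w) = 1"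
begin

lemma adj_sym: "adj v w \<Longrightarrow> adj w v"
  using simple unfolding simple_graph_def by blast

lemma adj_irrefl: "\<not> adj v v"
  using simple unfolding simple_graph_def by blast

lemma finite_neighbours: "finite {w. adj v w}"
  using loc_fin unfolding locally_finite_def by blast

lemma p_le_1: assumes "adj v w" shows "p v w \<le> 1"
proof -
  have "p v w \<le> (\<Sum>w | adj v w. p v w)"
    using assms by (intro member_le_sum p_nonneg finite_neighbours) auto
  then show ?thesis using p_sum by simp
qed

lemma sum_p_mult_le_1:
  assumes "\<And>y. adj x y \<Longrightarrow> 0 \<le> f y" "\<And>y. adj x y \<Longrightarrow> f y \<le> 1"
  shows "(\<Sum>y | adj x y. p x y * f y) \<le> 1"
proof -
  have "(\<Sum>y | adj x y. p x y * f y) \<le> (\<Sum>y | adj x y. p x y)"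
    using assms by (intro sum_mono) (simp add: mult_left_le p_nonneg)
  then show ?thesis using p_sum by simp
qed

fun path_weight :: "'a list \<Rightarrow> real" where
  "path_weight [] = 1"
| "path_weight [x] = 1"
| "path_weight (x # y # ys) = p x y * path_weight (y # ys)"

lemma path_weight_nonneg: "path_weight g \<ge> 0"
  by (induction g rule: path_weight.induct) (auto intro: mult_nonneg_nonneg p_nonneg)

lemma path_weight_Cons: "g \<noteq> [] \<Longrightarrow> path_weight (x # g) = p x (hd g) * path_weight g"
  by (cases g) auto

lemma path_weight_split:
  "i < length g \<Longrightarrow> path_weight g = path_weight (take (Suc i) g) * path_weight (drop i g)"
proof (induction g arbitrary: i)
  case (Cons x g)
  show ?case
  proof (cases i)
    case (Suc i')
    with Cons.prems have "i' < length g" "g \<noteq> []" by auto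
    then show ?thesis using Cons.IH[of i'] Suc by (simp add: path_weight_Cons)
  qed simp
qed simp

lemma path_weight_append:
  assumes "a \<noteq> []" "b \<noteq> []" "last a = hd b"
  shows "path_weight (butlast a @ b) = path_weight a * path_weight b"
  using path_weight_split[of "length a - 1" "butlast a @ b"]
    take_drop_butlast_append[OF assms(1,3,2)] assms by simp

lemma path_weight_snoc: "a \<noteq> [] \<Longrightarrow> path_weight (a @ [x]) = path_weight a * p (last a) x"
  by (induction a rule: path_weight.induct) auto

lemma path_weight_eq_prod:
  "g \<noteq> [] \<Longrightarrow> path_weight g = (\<Prod>i<length g - 1. p (g ! i) (g ! Suc i))"
  by (induction g rule: path_weight.induct)
    (auto simp: prod.lessThan_Suc_shift simp del: prod.lessThan_Suc)

definition walks_upto :: "'a \<Rightarrow> nat \<Rightarrow> 'a list set" where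
  "walks_upto x n = {g. g \<noteq> [] \<and> length g \<le> Suc n \<and> hd g = x \<and> successively adj g}"

lemma walks_upto_0: "walks_upto x 0 = {[x]}"
  unfolding walks_upto_def by (auto simp: le_Suc_eq length_Suc_conv)

lemma walks_upto_Suc: "walks_upto x (Suc n) = insert [x] (\<Union>y\<in>{y. adj x y}. Cons x ` walks_upto y n)"
proof (intro set_eqI iffI)
  fix g assume "g \<in> walks_upto x (Suc n)"
  then show "g \<in> insert [x] (\<Union>y\<in>{y. adj x y}. Cons x ` walks_upto y n)"
    unfolding walks_upto_def by (cases g; cases "tl g") auto
qed (auto simp: walks_upto_def successively_Cons)

lemma walks_upto_hd: "g \<in> walks_upto x n \<Longrightarrow> g \<noteq> [] \<and> hd g = x"
  unfolding walks_upto_def by simp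

lemma finite_walks_upto: "finite (walks_upto x n)"
  by (induction n arbitrary: x) (auto simp: walks_upto_0 walks_upto_Suc intro: finite_neighbours)

lemma finite_walks_upto_Collect: "finite {g \<in> walks_upto x n. P g}"
  using finite_walks_upto by simp

lemma walks_upto_mono: "n \<le> n' \<Longrightarrow> walks_upto x n \<subseteq> walks_upto x n'"
  unfolding walks_upto_def by auto

lemma walks_upto_take: "g \<in> walks_upto x n \<Longrightarrow> 0 < k \<Longrightarrow> take k g \<in> walks_upto x n"
  unfolding walks_upto_def using successively_append_iff[of adj "take k g" "drop k g"]
  by (auto simp: hd_take)

lemma walks_upto_drop: "g \<in> walks_upto x n \<Longrightarrow> i < length g \<Longrightarrow> drop i g \<in> walks_upto (g ! i) n"
  unfolding walks_upto_def using successively_append_iff[of adj "take i g" "drop i g"]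
  by (auto simp: hd_drop_conv_nth)

lemma walks_upto_append:
  assumes "a \<in> walks_upto x n" "b \<in> walks_upto y m" "last a = y"
  shows "butlast a @ b \<in> walks_upto x (n + m)"
proof (cases a rule: rev_cases)
  case (snoc a' y')
  with assms show ?thesis
    unfolding walks_upto_def by (cases b) (auto simp: successively_append_iff hd_append)
qed (use assms in \<open>simp add: walks_upto_def\<close>)

text \<open>For a prefix-free property P, walk_sum x n P is the probability that the chain started
  at x follows, within its first n steps, a path satisfying P.\<close>
definition walk_sum :: "'a \<Rightarrow> nat \<Rightarrow> ('a list \<Rightarrow> bool) \<Rightarrow> real" where
  "walk_sum x n P = (\<Sum>g\<in>{g \<in> walks_upto x n. P g}. path_weight g)"

lemma walk_sum_nonneg: "walk_sum x n P \<ge> 0"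
  unfolding walk_sum_def by (intro sum_nonneg path_weight_nonneg)

lemma walk_sum_mono:
  "(\<And>g. g \<in> walks_upto x n \<Longrightarrow> P g \<Longrightarrow> Q g) \<Longrightarrow> walk_sum x n P \<le> walk_sum x n Q"
  unfolding walk_sum_def
  by (intro sum_mono2 path_weight_nonneg) (auto intro: finite_subset[OF _ finite_walks_upto])

lemma walk_sum_cong: "(\<And>g. g \<in> walks_upto x n \<Longrightarrow> P g = Q g) \<Longrightarrow> walk_sum x n P = walk_sum x n Q"
  unfolding walk_sum_def by (rule sum.cong) auto

lemma walk_sum_eq_0: "(\<And>g. g \<in> walks_upto x n \<Longrightarrow> \<not> P g) \<Longrightarrow> walk_sum x n P = 0"
  unfolding walk_sum_def by (rule sum.neutral) auto

lemma walk_sum_split: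
  "walk_sum x n P = walk_sum x n (\<lambda>g. P g \<and> R g) + walk_sum x n (\<lambda>g. P g \<and> \<not> R g)"
proof -
  have "{g \<in> walks_upto x n. P g} =
      {g \<in> walks_upto x n. P g \<and> R g} \<union> {g \<in> walks_upto x n. P g \<and> \<not> R g}" by blast
  then show ?thesis unfolding walk_sum_def
    by (simp only:) (rule sum.union_disjoint, auto intro: finite_subset[OF _ finite_walks_upto])
qed

lemma walk_sum_0: "walk_sum x 0 P = (if P [x] then 1 else 0)"
proof -
  have "{g \<in> walks_upto x 0. P g} = (if P [x] then {[x]} else {})"
    by (auto simp: walks_upto_0)
  then show ?thesis by (simp add: walk_sum_def)
qed

lemma walk_sum_singleton: "walk_sum x n (\<lambda>g. g = [x]) = 1"
proof -
  have "{g \<in> walks_upto x n. g = [x]} = {[x]}" by (auto simp: walks_upto_def)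
  then show ?thesis unfolding walk_sum_def by simp
qed

lemma walk_sum_Suc:
  "walk_sum x (Suc n) P =
     (if P [x] then 1 else 0) + (\<Sum>y | adj x y. p x y * walk_sum y n (\<lambda>g. P (x # g)))"
proof -
  define T where "T y = Cons x ` {g \<in> walks_upto y n. P (x # g)}" for y
  have split: "{g \<in> walks_upto x (Suc n). P g} = {g \<in> walks_upto x 0. P g} \<union> (\<Union>y\<in>{y. adj x y}. T y)"
    unfolding walks_upto_Suc walks_upto_0 T_def by blast
  have T_sum: "(\<Sum>g\<in>T y. path_weight g) = p x y * walk_sum y n (\<lambda>g. P (x # g))" for y
  proof -
    have "(\<Sum>g\<in>T y. path_weight g) = (\<Sum>g\<in>{g \<in> walks_upto y n. P (x # g)}. p x y * path_weight g)"
      unfolding T_def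
      by (subst sum.reindex) (auto simp: walks_upto_def path_weight_Cons intro!: sum.cong)
    then show ?thesis by (simp add: walk_sum_def sum_distrib_left)
  qed
  have finite_T: "finite (T y)" for y
    unfolding T_def by (simp add: finite_walks_upto_Collect)
  have "(\<Sum>g\<in>(\<Union>y\<in>{y. adj x y}. T y). path_weight g) = (\<Sum>y | adj x y. \<Sum>g\<in>T y. path_weight g)"
    by (rule sum.UNION_disjoint)
      (auto simp: finite_T finite_neighbours, auto simp: T_def walks_upto_def)
  moreover have "walk_sum x (Suc n) P =
      walk_sum x 0 P + (\<Sum>g\<in>(\<Union>y\<in>{y. adj x y}. T y). path_weight g)"
    unfolding walk_sum_def split
    by (rule sum.union_disjoint)
      (auto simp: finite_T finite_neighbours finite_walks_upto_Collect,
       auto simp: T_def walks_upto_def)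
  ultimately show ?thesis by (simp add: T_sum walk_sum_0)
qed

lemma walk_sum_length_eq: "walk_sum x n (\<lambda>g. length g = Suc n) = 1"
  by (induction n arbitrary: x) (simp_all add: walk_sum_0 walk_sum_Suc p_sum)

lemma walk_sum_first_visit_le_1: "walk_sum x n (\<lambda>g. last g = y \<and> y \<notin> set (butlast g)) \<le> 1"
proof (induction n arbitrary: x)
  case (Suc n)
  show ?case
  proof (cases "x = y")
    case True
    have "walk_sum z n (\<lambda>g. last (x # g) = y \<and> y \<notin> set (butlast (x # g))) = 0" for z
      using True by (intro walk_sum_eq_0) (auto simp: walks_upto_def)
    then show ?thesis using True by (simp add: walk_sum_Suc)
  next
    case False
    have "walk_sum z n (\<lambda>g. last (x # g) = y \<and> y \<notin> set (butlast (x # g))) =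
        walk_sum z n (\<lambda>g. last g = y \<and> y \<notin> set (butlast g))" for z
      using False by (intro walk_sum_cong) (auto simp: walks_upto_def)
    then show ?thesis
      using False by (simp add: walk_sum_Suc sum_p_mult_le_1 Suc.IH walk_sum_nonneg)
  qed
qed (simp add: walk_sum_0)

lemma walk_sum_excursion_le_1: "walk_sum x n (excursion x) \<le> 1"
proof (cases n)
  case (Suc n')
  have "walk_sum y n' (\<lambda>g. excursion x (x # g))
      \<le> walk_sum y n' (\<lambda>g. last g = x \<and> x \<notin> set (butlast g))" for y
    by (rule walk_sum_mono) (auto simp: excursion_def walks_upto_def)
  then have "walk_sum y n' (\<lambda>g. excursion x (x # g)) \<le> 1" for y
    using walk_sum_first_visit_le_1 order_trans by blast
  then show ?thesis
    using Suc by (simp add: walk_sum_Suc sum_p_mult_le_1 walk_sum_nonneg excursion_def)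
qed (simp add: walk_sum_0 excursion_def)

lemma sum_path_weight_le_split:
  assumes "finite S" "finite A" "finite B"
    and split: "\<And>g. g \<in> S \<Longrightarrow> \<exists>i<length g. take (Suc i) g \<in> A \<and> drop i g \<in> B"
    and phi: "\<And>g. phi g \<ge> 0"
  shows "(\<Sum>g\<in>S. path_weight g * phi g)
           \<le> (\<Sum>a\<in>A. path_weight a * (\<Sum>b\<in>B. path_weight b * phi (butlast a @ b)))"
proof -
  obtain f where f: "\<And>g. g \<in> S \<Longrightarrow> f g < length g \<and> take (Suc (f g)) g \<in> A \<and> drop (f g) g \<in> B"
    using split by metis
  define h where "h g = (take (Suc (f g)) g, drop (f g) g)" for g
  have recover: "butlast (fst (h g)) @ snd (h g) = g" if "g \<in> S" for g
    using f[OF that] by (simp add: h_def butlast_take)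
  have inj: "inj_on h S"
    by (rule inj_on_inverseI[where g="\<lambda>q. butlast (fst q) @ snd q"]) (rule recover)
  have "h ` S \<subseteq> A \<times> B" using f unfolding h_def by auto
  have weight: "path_weight g = path_weight (fst (h g)) * path_weight (snd (h g))" if "g \<in> S" for g
    using path_weight_split f[OF that] unfolding h_def by simp
  let ?F = "\<lambda>q. path_weight (fst q) * (path_weight (snd q) * phi (butlast (fst q) @ snd q))"
  have "(\<Sum>g\<in>S. path_weight g * phi g) = (\<Sum>g\<in>S. ?F (h g))"
    using weight recover by (intro sum.cong) auto
  also have "\<dots> = (\<Sum>q\<in>h ` S. ?F q)" by (simp add: sum.reindex[OF inj])
  also have "\<dots> \<le> (\<Sum>q\<in>A \<times> B. ?F q)"
    using \<open>h ` S \<subseteq> A \<times> B\<close> assms(2,3)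
    by (intro sum_mono2 mult_nonneg_nonneg path_weight_nonneg phi) auto
  also have "\<dots> = (\<Sum>a\<in>A. \<Sum>b\<in>B. ?F (a, b))"
    by (simp add: sum.cartesian_product case_prod_beta)
  also have "\<dots> = (\<Sum>a\<in>A. path_weight a * (\<Sum>b\<in>B. path_weight b * phi (butlast a @ b)))"
    by (simp add: sum_distrib_left)
  finally show ?thesis .
qed

lemma sum_path_weight_append:
  assumes "finite A" "finite B" and inj: "inj_on (\<lambda>(a, b). butlast a @ b) (A \<times> B)"
    and "\<And>a b. a \<in> A \<Longrightarrow> b \<in> B \<Longrightarrow> a \<noteq> [] \<and> b \<noteq> [] \<and> last a = hd b"
  shows "(\<Sum>a\<in>A. path_weight a) * (\<Sum>b\<in>B. path_weight b)
           = (\<Sum>c\<in>(\<lambda>(a, b). butlast a @ b) ` (A \<times> B). path_weight c)"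
proof -
  have "(\<Sum>c\<in>(\<lambda>(a, b). butlast a @ b) ` (A \<times> B). path_weight c)
      = (\<Sum>(a, b)\<in>A \<times> B. path_weight a * path_weight b)"
    using assms by (subst sum.reindex[OF inj]) (auto intro!: sum.cong path_weight_append)
  then show ?thesis by (simp add: sum_product sum.cartesian_product)
qed

lemma sum_path_weight_excursions_append:
  assumes "finite A" "finite B" and A: "\<And>a. a \<in> A \<Longrightarrow> excursions x j a"
    and B: "\<And>b. b \<in> B \<Longrightarrow> b \<noteq> [] \<and> hd b = x"
  shows "(\<Sum>a\<in>A. path_weight a) * (\<Sum>b\<in>B. path_weight b)
           = (\<Sum>c\<in>(\<lambda>(a, b). butlast a @ b) ` (A \<times> B). path_weight c)"
proof (rule sum_path_weight_append)
  show "inj_on (\<lambda>(a, b). butlast a @ b) (A \<times> B)"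
  proof (rule inj_on_excursions_append)
    show "excursions x j a" if "a \<in> A" for a using A[OF that] .
    show "b \<noteq> [] \<and> hd b = x" if "a \<in> A" "b \<in> B" for a b using B[OF that(2)] .
  qed
  show "a \<noteq> [] \<and> b \<noteq> [] \<and> last a = hd b" if "a \<in> A" "b \<in> B" for a b
    using excursions_hd_last[OF A[OF that(1)]] B[OF that(2)] by simp
qed (rule assms)+

text \<open>Strong Markov property at the first visit to y.\<close>
lemma walk_sum_le_from_first_visit:
  assumes visit: "\<And>g. g \<in> walks_upto x n \<Longrightarrow> Q g \<Longrightarrow> y \<in> set g"
    and rest: "\<And>g i. g \<in> walks_upto x n \<Longrightarrow> Q g \<Longrightarrow> i < length g \<Longrightarrow> g ! i = y \<Longrightarrow> Q' (drop i g)"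
  shows "walk_sum x n Q \<le> walk_sum y n Q'"
proof -
  define A where "A = {a \<in> walks_upto x n. last a = y \<and> y \<notin> set (butlast a)}"
  define B where "B = {b \<in> walks_upto y n. Q' b}"
  have "walk_sum x n Q = (\<Sum>g\<in>{g \<in> walks_upto x n. Q g}. path_weight g * 1)"
    unfolding walk_sum_def by simp
  also have "\<dots> \<le> (\<Sum>a\<in>A. path_weight a * (\<Sum>b\<in>B. path_weight b * 1))"
  proof (rule sum_path_weight_le_split)
    fix g assume g: "g \<in> {g \<in> walks_upto x n. Q g}"
    then obtain ys zs where split: "g = ys @ y # zs" "y \<notin> set ys"
      using visit split_list_first by (metis (mono_tags, lifting) mem_Collect_eq)
    let ?i = "length ys"
    have "take (Suc ?i) g \<in> walks_upto x n" using g by (intro walks_upto_take) auto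
    then have "take (Suc ?i) g \<in> A" using split by (simp add: A_def)
    moreover have "drop ?i g \<in> B"
      using g walks_upto_drop[of g x n ?i] rest[of g ?i] split by (simp add: B_def)
    ultimately show "\<exists>i<length g. take (Suc i) g \<in> A \<and> drop i g \<in> B"
      using split by (intro exI[of _ ?i]) auto
  qed (auto simp: A_def B_def finite_walks_upto_Collect)
  also have "\<dots> = walk_sum x n (\<lambda>g. last g = y \<and> y \<notin> set (butlast g)) * walk_sum y n Q'"
    unfolding A_def B_def walk_sum_def by (simp add: sum_distrib_right)
  also have "\<dots> \<le> walk_sum y n Q'"
    using walk_sum_first_visit_le_1 walk_sum_nonneg by (simp add: mult_left_le_one_le)
  finally show ?thesis .
qed

text \<open>The expected number of visits to y within n steps of the chain started at x and
  killed at z.\<close>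
definition green :: "'a \<Rightarrow> 'a \<Rightarrow> 'a \<Rightarrow> nat \<Rightarrow> real" where
  "green z x y n = walk_sum x n (\<lambda>g. last g = y \<and> z \<notin> set g)"

lemma green_nonneg: "green z x y n \<ge> 0"
  unfolding green_def by (rule walk_sum_nonneg)

lemma green_renewal_le:
  "green z y y (Suc n) \<le> 1 + walk_sum y (Suc n) (\<lambda>e. excursion y e \<and> z \<notin> set e) * green z y y n"
proof -
  define A where "A = {e \<in> walks_upto y (Suc n). excursion y e \<and> z \<notin> set e}"
  define B where "B = {b \<in> walks_upto y n. last b = y \<and> z \<notin> set b}"
  define S where "S = {g \<in> walks_upto y (Suc n). (last g = y \<and> z \<notin> set g) \<and> g \<noteq> [y]}"
  have "(\<Sum>g\<in>S. path_weight g * 1) \<le> (\<Sum>a\<in>A. path_weight a * (\<Sum>b\<in>B. path_weight b * 1))"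
  proof (rule sum_path_weight_le_split)
    fix g assume "g \<in> S"
    then have g: "g \<in> walks_upto y (Suc n)" "last g = y" "z \<notin> set g" "g \<noteq> [y]"
      by (auto simp: S_def)
    have "g \<noteq> []" "hd g = y" "length g \<le> Suc (Suc n)" using g(1) by (auto simp: walks_upto_def)
    then have "2 \<le> length g" using g(4) by (cases g; cases "tl g") auto
    then obtain i where i: "0 < i" "i < length g" "g ! i = y" "excursion y (take (Suc i) g)"
      using excursion_prefix[OF _ \<open>hd g = y\<close> g(2)] by blast
    have "take (Suc i) g \<in> A"
      using walks_upto_take[OF g(1)] i g(3) set_take_subset[of "Suc i" g] by (auto simp: A_def)
    moreover have "drop i g \<in> B"
      using walks_upto_drop[OF g(1) i(2)] i g(2,3) set_drop_subset[of i g] \<open>length g \<le> Suc (Suc n)\<close>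
      by (auto simp: B_def walks_upto_def)
    ultimately show "\<exists>i<length g. take (Suc i) g \<in> A \<and> drop i g \<in> B"
      using i(2) by blast
  qed (auto simp: A_def B_def S_def finite_walks_upto_Collect)
  then have returns: "walk_sum y (Suc n) (\<lambda>g. (last g = y \<and> z \<notin> set g) \<and> g \<noteq> [y])
      \<le> walk_sum y (Suc n) (\<lambda>e. excursion y e \<and> z \<notin> set e) * green z y y n"
    by (simp add: A_def B_def S_def walk_sum_def green_def sum_distrib_right)
  have "walk_sum y (Suc n) (\<lambda>g. (last g = y \<and> z \<notin> set g) \<and> g = [y])
      \<le> walk_sum y (Suc n) (\<lambda>g. g = [y])"
    by (rule walk_sum_mono) auto
  then have stay: "walk_sum y (Suc n) (\<lambda>g. (last g = y \<and> z \<notin> set g) \<and> g = [y]) \<le> 1"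
    by (simp only: walk_sum_singleton)
  show ?thesis
    unfolding green_def[of z y y "Suc n"]
    by (subst walk_sum_split[where R = "\<lambda>g. g = [y]"]) (rule add_mono[OF stay returns])
qed

lemma walk_sum_excursion_avoiding_neighbour:
  assumes "adj y z"
  shows "walk_sum y n (\<lambda>e. excursion y e \<and> z \<notin> set e) \<le> 1 - p y z"
proof (cases n)
  case 0
  then show ?thesis using p_le_1[OF assms] by (simp add: walk_sum_0 excursion_def)
next
  case (Suc n')
  have bound: "walk_sum w n' (\<lambda>g. excursion y (y # g) \<and> z \<notin> set (y # g))
      \<le> (if w = z then 0 else 1)" for w
  proof (cases "w = z")
    case True
    have "walk_sum w n' (\<lambda>g. excursion y (y # g) \<and> z \<notin> set (y # g)) = 0"
      using True by (intro walk_sum_eq_0) (auto simp: walks_upto_def dest: hd_in_set)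
    then show ?thesis using True by simp
  next
    case False
    have "walk_sum w n' (\<lambda>g. excursion y (y # g) \<and> z \<notin> set (y # g))
        \<le> walk_sum w n' (\<lambda>g. last g = y \<and> y \<notin> set (butlast g))"
      by (rule walk_sum_mono) (auto simp: excursion_def walks_upto_def)
    then show ?thesis using walk_sum_first_visit_le_1[of w n' y] False by simp
  qed
  then have "p y w * walk_sum w n' (\<lambda>g. excursion y (y # g) \<and> z \<notin> set (y # g))
      \<le> p y w - (if w = z then p y w else 0)" for w
    using mult_left_mono[OF bound[of w] p_nonneg[of y w]] by (cases "w = z") simp_all
  then have "(\<Sum>w | adj y w. p y w * walk_sum w n' (\<lambda>g. excursion y (y # g) \<and> z \<notin> set (y # g)))
      \<le> (\<Sum>w | adj y w. p y w - (if w = z then p y w else 0))"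
    by (rule sum_mono)
  also have "\<dots> = 1 - p y z"
    using assms by (simp add: sum_subtractf p_sum finite_neighbours)
  finally show ?thesis using Suc by (simp add: walk_sum_Suc excursion_def)
qed

lemma green_neighbour_le:
  assumes "adj y z"
  shows "green z y y n \<le> 1 / p y z"
proof (induction n)
  case 0
  have "y \<noteq> z" using assms adj_irrefl by blast
  then show ?case using p_pos[OF assms] p_le_1[OF assms] by (simp add: green_def walk_sum_0)
next
  case (Suc n)
  have "walk_sum y (Suc n) (\<lambda>e. excursion y e \<and> z \<notin> set e) * green z y y n
      \<le> (1 - p y z) * (1 / p y z)"
    using walk_sum_excursion_avoiding_neighbour[OF assms] Suc.IH p_le_1[OF assms] green_nonneg
    by (intro mult_mono) auto
  then have "green z y y (Suc n) \<le> 1 + (1 - p y z) * (1 / p y z)"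
    using green_renewal_le[of z y n] by linarith
  also have "\<dots> = 1 / p y z" using p_pos[OF assms] by (simp add: field_simps)
  finally show ?case .
qed

lemma green_renewal_ge:
  assumes "u \<noteq> x"
  shows "1 + walk_sum x n (\<lambda>e. excursion x e \<and> u \<notin> set e) * green u x x N \<le> green u x x (n + N)"
proof -
  define A where "A = {e \<in> walks_upto x n. excursion x e \<and> u \<notin> set e}"
  define B where "B = {b \<in> walks_upto x N. last b = x \<and> u \<notin> set b}"
  define C where "C = {c \<in> walks_upto x (n + N). last c = x \<and> u \<notin> set c}"
  define I where "I = (\<lambda>(a, b). butlast a @ b) ` (A \<times> B)"
  have A: "a \<in> walks_upto x n" "excursion x a" "u \<notin> set a" if "a \<in> A" for a
    using that unfolding A_def by auto
  have B: "b \<in> walks_upto x N" "b \<noteq> []" "hd b = x" "last b = x" "u \<notin> set b" if "b \<in> B" for b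
    using that unfolding B_def walks_upto_def by auto
  have product: "(\<Sum>a\<in>A. path_weight a) * (\<Sum>b\<in>B. path_weight b) = (\<Sum>c\<in>I. path_weight c)"
    unfolding I_def
  proof (rule sum_path_weight_excursions_append)
    show "excursions x (Suc 0) a" if "a \<in> A" for a
      using A(2)[OF that] by (simp only: excursions_Suc_0)
    show "b \<noteq> [] \<and> hd b = x" if "b \<in> B" for b
      using B(2,3)[OF that] by simp
  qed (simp_all add: A_def B_def finite_walks_upto_Collect)
  have I: "I \<subseteq> C - {[x]}"
  proof
    fix c assume "c \<in> I"
    then obtain a b where ab: "a \<in> A" "b \<in> B" "c = butlast a @ b" unfolding I_def by auto
    have "2 \<le> length a" using A(2)[OF ab(1)] by (simp add: excursion_def)
    then have "2 \<le> length c" using ab(3) B(2)[OF ab(2)] by (cases b) auto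
    then have "c \<noteq> [x]" by auto
    moreover have "c \<in> walks_upto x (n + N)"
      using A[OF ab(1)] B[OF ab(2)] excursion_hd_last[of x a] ab(3)
      by (auto intro: walks_upto_append)
    ultimately show "c \<in> C - {[x]}"
      using ab A[OF ab(1)] B[OF ab(2)] by (auto simp: C_def dest: in_set_butlastD)
  qed
  have "finite C" by (simp add: C_def finite_walks_upto_Collect)
  have "[x] \<in> C" using assms by (simp add: C_def walks_upto_def)
  have "1 + (\<Sum>c\<in>I. path_weight c) = (\<Sum>c\<in>insert [x] I. path_weight c)"
    using I finite_subset[OF I] \<open>finite C\<close> by (subst sum.insert) auto
  also have "\<dots> \<le> (\<Sum>c\<in>C. path_weight c)"
    using I \<open>[x] \<in> C\<close> \<open>finite C\<close> by (intro sum_mono2 path_weight_nonneg) auto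
  finally show ?thesis
    using product by (simp add: A_def B_def C_def walk_sum_def green_def)
qed

text \<open>With a the probability of an excursion avoiding u and G the supremum of the Green
  function, renewal at the returns to x gives 1 + a G \<le> G, hence a \<le> 1 - 1 / G.\<close>
lemma walk_sum_excursion_avoiding_le:
  assumes "u \<noteq> x" and bound: "\<And>N. green u x x N \<le> B"
  shows "walk_sum x n (\<lambda>e. excursion x e \<and> u \<notin> set e) \<le> 1 - 1 / B"
proof -
  define a where "a = walk_sum x n (\<lambda>e. excursion x e \<and> u \<notin> set e)"
  define G where "G = (SUP N. green u x x N)"
  have bdd: "bdd_above (range (green u x x))" using bound by (intro bdd_aboveI2) auto
  have le_G: "green u x x N \<le> G" for N unfolding G_def by (rule cSUP_upper[OF _ bdd]) simp
  have "G \<le> B" unfolding G_def by (rule cSUP_least) (auto intro: bound)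
  have "green u x x 0 = 1" using assms(1) by (simp add: green_def walk_sum_0)
  then have "1 \<le> G" using le_G[of 0] by simp
  have renewal: "1 + a * green u x x N \<le> G" for N
    using green_renewal_ge[OF assms(1), of n N] le_G[of "n + N"] unfolding a_def by linarith
  have "1 + a * G \<le> G"
  proof (cases "a = 0")
    case False
    then have "0 < a" using walk_sum_nonneg unfolding a_def by (simp add: order_less_le)
    then have "green u x x N \<le> (G - 1) / a" for N using renewal[of N] by (simp add: field_simps)
    then have "G \<le> (G - 1) / a" unfolding G_def by (intro cSUP_least) auto
    then show ?thesis using \<open>0 < a\<close> by (simp add: field_simps)
  qed (use \<open>1 \<le> G\<close> in simp)
  then have "a \<le> 1 - 1 / G" using \<open>1 \<le> G\<close> by (simp add: field_simps)
  also have "\<dots> \<le> 1 - 1 / B" using \<open>G \<le> B\<close> \<open>1 \<le> G\<close> by (simp add: frac_le)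
  finally show ?thesis unfolding a_def .
qed

end

locale reversible_chain = graph_chain +
  fixes mu :: "'a \<Rightarrow> real"
  assumes mu_pos: "mu v > 0" and detailed_balance: "mu v * p v w = mu w * p w v"
begin

lemma path_weight_rev: "g \<noteq> [] \<Longrightarrow> mu (hd g) * path_weight g = mu (last g) * path_weight (rev g)"
proof (induction g rule: path_weight.induct)
  case (3 x y ys)
  have "mu x * path_weight (x # y # ys) = p y x * (mu y * path_weight (y # ys))"
    using detailed_balance[of x y] by simp
  also have "\<dots> = p y x * (mu (last (y # ys)) * path_weight (rev (y # ys)))"
    using 3 by simp
  also have "\<dots> = mu (last (y # ys)) * path_weight (rev (y # ys) @ [x])"
    by (subst path_weight_snoc) auto
  finally show ?case by simp
qed auto

lemma rev_walks_upto:
  assumes "g \<in> walks_upto y n" "last g = x"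
  shows "rev g \<in> walks_upto x n"
proof -
  have "successively (\<lambda>a b. adj b a) g"
    by (rule successively_mono[of adj]) (use assms(1) in \<open>auto simp: walks_upto_def intro: adj_sym\<close>)
  then show ?thesis using assms by (auto simp: walks_upto_def hd_rev)
qed

lemma walk_sum_rev:
  "mu y * walk_sum y n (\<lambda>g. last g = x \<and> P g) = mu x * walk_sum x n (\<lambda>g. last g = y \<and> P (rev g))"
proof -
  define S where "S = {g \<in> walks_upto y n. last g = x \<and> P g}"
  have image: "rev ` S = {g \<in> walks_upto x n. last g = y \<and> P (rev g)}"
  proof (intro equalityI subsetI)
    fix g assume "g \<in> {g \<in> walks_upto x n. last g = y \<and> P (rev g)}"
    then have "rev g \<in> S" using rev_walks_upto[of g x n y] walks_upto_hd[of g x n]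
      by (auto simp: S_def last_rev)
    then have "rev (rev g) \<in> rev ` S" by (rule imageI)
    then show "g \<in> rev ` S" by simp
  next
    fix g assume "g \<in> rev ` S"
    then obtain h where "h \<in> S" "g = rev h" by auto
    then show "g \<in> {g \<in> walks_upto x n. last g = y \<and> P (rev g)}"
      using rev_walks_upto[of h y n x] walks_upto_hd[of h y n] by (auto simp: S_def last_rev)
  qed
  have "mu y * walk_sum y n (\<lambda>g. last g = x \<and> P g) = (\<Sum>g\<in>S. mu x * path_weight (rev g))"
    unfolding walk_sum_def S_def[symmetric] sum_distrib_left
  proof (rule sum.cong)
    fix g assume "g \<in> S"
    then show "mu y * path_weight g = mu x * path_weight (rev g)"
      using path_weight_rev[of g] walks_upto_hd[of g y n] by (simp add: S_def)
  qed simp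
  also have "\<dots> = (\<Sum>g\<in>rev ` S. mu x * path_weight g)"
    by (subst sum.reindex) (auto simp: inj_on_def)
  also have "\<dots> = mu x * walk_sum x n (\<lambda>g. last g = y \<and> P (rev g))"
    unfolding image walk_sum_def sum_distrib_left by (rule refl)
  finally show ?thesis .
qed

text \<open>Visits to x after a visit to y are cut at the first visit to y; reversing the remaining
  walk from y to x gives a walk from x to y, which is cut again at its first visit to y.\<close>
lemma green_triangle: "green z x x n \<le> green y x x n + mu x / mu y * green z y y n"
proof -
  have avoid: "walk_sum x n (\<lambda>g. (last g = x \<and> z \<notin> set g) \<and> y \<notin> set g) \<le> green y x x n"
    unfolding green_def by (rule walk_sum_mono) auto
  have "walk_sum x n (\<lambda>g. (last g = x \<and> z \<notin> set g) \<and> \<not> y \<notin> set g)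
      \<le> walk_sum y n (\<lambda>g. last g = x \<and> z \<notin> set g)"
    by (rule walk_sum_le_from_first_visit) (auto dest: in_set_dropD)
  also have "\<dots> = mu x / mu y * walk_sum x n (\<lambda>g. last g = y \<and> z \<notin> set g)"
    using walk_sum_rev[of y n x "\<lambda>g. z \<notin> set g"] mu_pos[of y] by (simp add: field_simps)
  also have "\<dots> \<le> mu x / mu y * green z y y n"
    unfolding green_def using mu_pos[of x] mu_pos[of y]
    by (intro mult_left_mono walk_sum_le_from_first_visit)
      (auto simp: walks_upto_def dest: in_set_dropD)
  finally have visit: "walk_sum x n (\<lambda>g. (last g = x \<and> z \<notin> set g) \<and> \<not> y \<notin> set g)
      \<le> mu x / mu y * green z y y n" .
  show ?thesis
    unfolding green_def[of z x x]
    by (subst walk_sum_split[where R = "\<lambda>g. y \<notin> set g"]) (rule add_mono[OF avoid visit])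
qed

end

text \<open>The potential of a range of size s when i excursions remain. If every excursion enlarges
  each range of size at most m with probability at least q, it decreases in expectation along
  excursions.\<close>
definition range_potential :: "real \<Rightarrow> real \<Rightarrow> nat \<Rightarrow> nat \<Rightarrow> real" where
  "range_potential m q s i = (if real s \<le> m then 2 powr (m - real s) * (1 - q / 2) ^ i else 0)"

lemma range_potential_nonneg: "q \<le> 2 \<Longrightarrow> 0 \<le> range_potential m q s i"
  by (simp add: range_potential_def)

lemma range_potential_ge_1: "real s \<le> m \<Longrightarrow> 1 \<le> range_potential m q s 0"
  by (simp add: range_potential_def ge_one_powr_ge_zero)

lemma range_potential_union_le:
  assumes "finite R" "finite A" "q \<le> 2" "real (card R) \<le> m"
  shows "range_potential m q (card (R \<union> A)) i
           \<le> (if A \<subseteq> R then 1 else 1 / 2) * (2 powr (m - card R) * (1 - q / 2) ^ i)"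
proof (cases "A \<subseteq> R")
  case True
  then show ?thesis using assms by (simp add: range_potential_def Un_absorb2)
next
  case False
  then have "card R < card (R \<union> A)" using assms(1,2) by (intro psubset_card_mono) auto
  then have "2 powr (m - card (R \<union> A)) \<le> 2 powr (m - card R - 1)" by (intro powr_mono) auto
  also have "\<dots> = 2 powr (m - card R) / 2" by (simp add: powr_diff)
  finally have "2 powr (m - card (R \<union> A)) * (1 - q / 2) ^ i
      \<le> 2 powr (m - card R) / 2 * (1 - q / 2) ^ i"
    using assms(3) by (intro mult_right_mono) auto
  then show ?thesis using False assms(3) by (simp add: range_potential_def)
qed

lemma range_potential_le_exp:
  assumes "q \<le> 2" and "real N \<le> real k * q"
  shows "range_potential (real N / 4) q 1 k \<le> exp (- real N / 8)"
proof (cases "1 \<le> real N / 4")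
  case True
  have "(1 - q / 2) ^ k \<le> exp (- (q / 2)) ^ k"
    using assms(1) exp_ge_add_one_self[of "- (q / 2)"] by (intro power_mono) auto
  also have "\<dots> = exp (- (real k * q / 2))" by (simp add: exp_of_nat_mult[symmetric])
  also have "\<dots> \<le> exp (- (real N / 2))" using assms(2) by simp
  finally have "range_potential (real N / 4) q 1 k
      \<le> exp ((real N / 4 - 1) * ln 2) * exp (- (real N / 2))"
    using True by (simp add: range_potential_def powr_def mult_left_mono)
  also have "\<dots> = exp ((real N / 4 - 1) * ln 2 - real N / 2)" by (simp add: exp_add[symmetric])
  also have "\<dots> \<le> exp (- real N / 8)"
  proof -
    have "(real N / 4 - 1) * ln 2 = real N * ln 2 / 4 - ln 2" by (simp add: algebra_simps)
    moreover have "real N * ln 2 \<le> real N" using ln_2_less_1 by (simp add: mult_left_le)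
    ultimately have "(real N / 4 - 1) * ln 2 - real N / 2 \<le> - real N / 8"
      using ln_gt_zero[of "2::real"] by linarith
    then show ?thesis by simp
  qed
  finally show ?thesis .
qed (simp add: range_potential_def)

context graph_chain begin

definition excursion_walks :: "'a \<Rightarrow> nat \<Rightarrow> nat \<Rightarrow> 'a list set" where
  "excursion_walks x j n = {g \<in> walks_upto x n. excursions x j g}"

lemma finite_excursion_walks: "finite (excursion_walks x j n)"
  by (simp add: excursion_walks_def finite_walks_upto_Collect)

lemma excursion_walks_mono: "n \<le> n' \<Longrightarrow> excursion_walks x j n \<subseteq> excursion_walks x j n'"
  unfolding excursion_walks_def using walks_upto_mono by blast

lemma excursion_walks_0: "excursion_walks x 0 n = {[x]}"
  by (auto simp: excursion_walks_def walks_upto_def)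

lemma excursion_walks_Suc_split:
  assumes "g \<in> excursion_walks x (Suc j) n"
  shows "\<exists>i<length g. take (Suc i) g \<in> excursion_walks x j n
           \<and> drop i g \<in> {e \<in> walks_upto x n. excursion x e}"
proof -
  obtain r e where g: "g \<in> walks_upto x n" "g = butlast r @ e"
    and r: "excursions x j r" and e: "excursion x e"
    using assms by (auto simp: excursion_walks_def)
  have r': "r \<noteq> []" "last r = x" and e': "e \<noteq> []" "hd e = x"
    using excursions_hd_last[OF r] excursion_hd_last[OF e] by auto
  note split = take_drop_butlast_append[of r e, OF r'(1) _ e'(1)]
  have "take (Suc (length r - 1)) g \<in> excursion_walks x j n"
    using walks_upto_take[OF g(1), of "length r"] split r r' e' g(2)
    by (simp add: excursion_walks_def)
  moreover have "drop (length r - 1) g \<in> {e \<in> walks_upto x n. excursion x e}"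
    using walks_upto_drop[OF g(1), of "length r - 1"] split r' e' e g(2)
    by (simp add: hd_drop_conv_nth[symmetric])
  ultimately show ?thesis
    using g(2) e'(1) by (intro exI[of _ "length r - 1"]) auto
qed

lemma excursion_potential_le:
  assumes "finite R" "q \<le> 2"
    and escape: "real (card R) \<le> m \<Longrightarrow> walk_sum x n (\<lambda>e. excursion x e \<and> set e \<subseteq> R) \<le> 1 - q"
  shows "(\<Sum>e\<in>{e \<in> walks_upto x n. excursion x e}.
            path_weight e * range_potential m q (card (R \<union> set e)) i)
           \<le> range_potential m q (card R) (Suc i)"
proof (cases "real (card R) \<le> m")
  case True
  define E where "E = {e \<in> walks_upto x n. excursion x e}"
  define h where "h = 2 powr (m - card R) * (1 - q / 2) ^ i"
  have "h \<ge> 0" using assms(2) by (simp add: h_def)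
  have "(\<Sum>e\<in>E. path_weight e * range_potential m q (card (R \<union> set e)) i)
      \<le> (\<Sum>e\<in>E. path_weight e * (h / 2 + (if set e \<subseteq> R then h / 2 else 0)))"
  proof (intro sum_mono mult_left_mono path_weight_nonneg)
    fix e
    show "range_potential m q (card (R \<union> set e)) i \<le> h / 2 + (if set e \<subseteq> R then h / 2 else 0)"
      using range_potential_union_le[OF assms(1) _ assms(2) True, of "set e" i]
      unfolding h_def[symmetric] by (cases "set e \<subseteq> R") auto
  qed
  also have "\<dots> = (\<Sum>e\<in>E. h / 2 * path_weight e + h / 2 * (if set e \<subseteq> R then path_weight e else 0))"
    by (intro sum.cong) (auto simp: algebra_simps)
  also have "\<dots> = h / 2 * (\<Sum>e\<in>E. path_weight e) + h / 2 * (\<Sum>e\<in>{e \<in> E. set e \<subseteq> R}. path_weight e)"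
    using finite_walks_upto_Collect[of x n "excursion x"]
    by (simp add: sum.distrib sum_distrib_left sum.inter_filter flip: E_def)
  also have "\<dots> = h / 2 *
      (walk_sum x n (excursion x) + walk_sum x n (\<lambda>e. excursion x e \<and> set e \<subseteq> R))"
    by (simp add: E_def walk_sum_def algebra_simps conj_assoc)
  also have "\<dots> \<le> h / 2 * (1 + (1 - q))"
    using walk_sum_excursion_le_1 escape[OF True] \<open>h \<ge> 0\<close> by (intro mult_left_mono add_mono) auto
  also have "\<dots> = range_potential m q (card R) (Suc i)"
    using True by (simp add: range_potential_def h_def field_simps)
  finally show ?thesis unfolding E_def .
next
  case False
  then have "range_potential m q (card (R \<union> set e)) i = 0" for e
    using card_mono[OF _ Un_upper1, of R "set e"] assms(1) by (simp add: range_potential_def)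
  then show ?thesis using False assms(3) by (simp add: range_potential_def)
qed

lemma excursions_potential_le:
  assumes "q \<le> 2"
    and escape: "\<And>R. finite R \<Longrightarrow> x \<in> R \<Longrightarrow> real (card R) \<le> m \<Longrightarrow>
      walk_sum x n (\<lambda>e. excursion x e \<and> set e \<subseteq> R) \<le> 1 - q"
  shows "(\<Sum>g\<in>excursion_walks x (Suc j) n. path_weight g * range_potential m q (card (set g)) i)
           \<le> (\<Sum>r\<in>excursion_walks x j n. path_weight r * range_potential m q (card (set r)) (Suc i))"
proof -
  define E where "E = {e \<in> walks_upto x n. excursion x e}"
  have "(\<Sum>g\<in>excursion_walks x (Suc j) n. path_weight g * range_potential m q (card (set g)) i)
      \<le> (\<Sum>r\<in>excursion_walks x j n.
           path_weight r *
             (\<Sum>e\<in>E. path_weight e * range_potential m q (card (set (butlast r @ e))) i))"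
  proof (rule sum_path_weight_le_split)
    fix g assume "g \<in> excursion_walks x (Suc j) n"
    then show "\<exists>i<length g. take (Suc i) g \<in> excursion_walks x j n \<and> drop i g \<in> E"
      unfolding E_def by (rule excursion_walks_Suc_split)
  qed (simp_all add: finite_excursion_walks E_def finite_walks_upto_Collect
      range_potential_nonneg assms(1))
  also have "\<dots> \<le> (\<Sum>r\<in>excursion_walks x j n.
      path_weight r * range_potential m q (card (set r)) (Suc i))"
  proof (intro sum_mono mult_left_mono path_weight_nonneg)
    fix r assume "r \<in> excursion_walks x j n"
    then have "excursions x j r" by (simp add: excursion_walks_def)
    then have r: "r \<noteq> []" "last r = x" "x \<in> set r"
      using excursions_hd_last[of x j r] last_in_set[of r] by auto
    have "(\<Sum>e\<in>E. path_weight e * range_potential m q (card (set (butlast r @ e))) i)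
        = (\<Sum>e\<in>E. path_weight e * range_potential m q (card (set r \<union> set e)) i)"
    proof (rule sum.cong)
      fix e assume "e \<in> E"
      then have "set (butlast r @ e) = set r \<union> set e"
        using r excursion_hd_last[of x e] by (intro set_butlast_append) (auto simp: E_def)
      then show "path_weight e * range_potential m q (card (set (butlast r @ e))) i
          = path_weight e * range_potential m q (card (set r \<union> set e)) i" by simp
    qed simp
    also have "\<dots> \<le> range_potential m q (card (set r)) (Suc i)"
      unfolding E_def by (rule excursion_potential_le) (use assms r in auto)
    finally show "(\<Sum>e\<in>E. path_weight e * range_potential m q (card (set (butlast r @ e))) i)
        \<le> range_potential m q (card (set r)) (Suc i)" .
  qed
  finally show ?thesis .
qed

lemma small_range_weight_le:
  assumes "q \<le> 2"
    and escape: "\<And>R. finite R \<Longrightarrow> x \<in> R \<Longrightarrow> real (card R) \<le> m \<Longrightarrow>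
      walk_sum x n (\<lambda>e. excursion x e \<and> set e \<subseteq> R) \<le> 1 - q"
  shows "(\<Sum>g\<in>{g \<in> excursion_walks x k n. real (card (set g)) \<le> m}. path_weight g)
           \<le> range_potential m q 1 k"
proof -
  have chain: "(\<Sum>g\<in>excursion_walks x j n.
        path_weight g * range_potential m q (card (set g)) (k - j)) \<le> range_potential m q 1 k"
    if "j \<le> k" for j
    using that
  proof (induction j)
    case (Suc j)
    then have "Suc (k - Suc j) = k - j" by simp
    then show ?case
      using excursions_potential_le[where m = m and j = j and i = "k - Suc j", OF assms] Suc by simp
  qed (simp add: excursion_walks_0)
  have "(\<Sum>g\<in>{g \<in> excursion_walks x k n. real (card (set g)) \<le> m}. path_weight g)
      \<le> (\<Sum>g\<in>{g \<in> excursion_walks x k n. real (card (set g)) \<le> m}.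
           path_weight g * range_potential m q (card (set g)) 0)"
  proof (rule sum_mono)
    fix g assume "g \<in> {g \<in> excursion_walks x k n. real (card (set g)) \<le> m}"
    then have "1 \<le> range_potential m q (card (set g)) 0" by (simp add: range_potential_ge_1)
    from mult_left_mono[OF this path_weight_nonneg[of g]]
    show "path_weight g \<le> path_weight g * range_potential m q (card (set g)) 0" by simp
  qed
  also have "\<dots> \<le> (\<Sum>g\<in>excursion_walks x k n. path_weight g * range_potential m q (card (set g)) 0)"
    using range_potential_nonneg[OF assms(1)]
    by (intro sum_mono2 finite_excursion_walks mult_nonneg_nonneg path_weight_nonneg) auto
  also have "\<dots> \<le> range_potential m q 1 k" using chain[of k] by simp
  finally show ?thesis .
qed

lemma excursion_walks_weight_Suc_ge:
  "(\<Sum>g\<in>excursion_walks x j a. path_weight g) * walk_sum x b (excursion x)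
     \<le> (\<Sum>g\<in>excursion_walks x (Suc j) (a + b). path_weight g)"
proof -
  define A where "A = excursion_walks x j a"
  define B where "B = {e \<in> walks_upto x b. excursion x e}"
  have A: "r \<in> walks_upto x a" "excursions x j r" "r \<noteq> []" "last r = x" if "r \<in> A" for r
    using that excursions_hd_last[of x j r] by (auto simp: A_def excursion_walks_def)
  have B: "e \<in> walks_upto x b" "excursion x e" "e \<noteq> []" "hd e = x" if "e \<in> B" for e
    using that excursion_hd_last[of x e] by (auto simp: B_def)
  have "(\<Sum>r\<in>A. path_weight r) * (\<Sum>e\<in>B. path_weight e)
      = (\<Sum>c\<in>(\<lambda>(r, e). butlast r @ e) ` (A \<times> B). path_weight c)"
  proof (rule sum_path_weight_excursions_append)
    show "excursions x j r" if "r \<in> A" for r using A(2)[OF that] .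
    show "e \<noteq> [] \<and> hd e = x" if "e \<in> B" for e using B(3,4)[OF that] by simp
  qed (simp_all add: A_def B_def finite_excursion_walks finite_walks_upto_Collect)
  also have "\<dots> \<le> (\<Sum>g\<in>excursion_walks x (Suc j) (a + b). path_weight g)"
  proof (intro sum_mono2 finite_excursion_walks path_weight_nonneg subsetI)
    fix c assume "c \<in> (\<lambda>(r, e). butlast r @ e) ` (A \<times> B)"
    then obtain r e where "r \<in> A" "e \<in> B" "c = butlast r @ e" by auto
    then show "c \<in> excursion_walks x (Suc j) (a + b)"
      using A[OF \<open>r \<in> A\<close>] B[OF \<open>e \<in> B\<close>] walks_upto_append[of r x a e x b]
      by (auto simp: excursion_walks_def)
  qed
  finally show ?thesis by (simp add: A_def B_def walk_sum_def)
qed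

lemma excursion_walks_weight_approx_1:
  assumes lim: "(\<lambda>n. walk_sum x n (excursion x)) \<longlonglongrightarrow> 1" and "0 < \<epsilon>"
  shows "\<exists>n. 1 - \<epsilon> \<le> (\<Sum>g\<in>excursion_walks x j n. path_weight g)"
  using \<open>0 < \<epsilon>\<close>
proof (induction j arbitrary: \<epsilon>)
  case 0
  then show ?case by (simp add: excursion_walks_0)
next
  case (Suc j)
  show ?case
  proof (cases "\<epsilon> < 1")
    case True
    then obtain a where a: "1 - \<epsilon> / 2 \<le> (\<Sum>g\<in>excursion_walks x j a. path_weight g)"
      using Suc.IH[of "\<epsilon> / 2"] Suc.prems by auto
    have "\<forall>\<^sub>F n in sequentially. 1 - \<epsilon> / 2 < walk_sum x n (excursion x)"
      using order_tendstoD(1)[OF lim, of "1 - \<epsilon> / 2"] Suc.prems by simp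
    then obtain b where b: "1 - \<epsilon> / 2 \<le> walk_sum x b (excursion x)"
      by (metis eventually_sequentially le_refl less_imp_le)
    have "1 - \<epsilon> \<le> (1 - \<epsilon> / 2) * (1 - \<epsilon> / 2)" by (simp add: algebra_simps)
    also have "\<dots> \<le> (\<Sum>g\<in>excursion_walks x j a. path_weight g) * walk_sum x b (excursion x)"
      using a b True by (intro mult_mono) auto
    also have "\<dots> \<le> (\<Sum>g\<in>excursion_walks x (Suc j) (a + b). path_weight g)"
      by (rule excursion_walks_weight_Suc_ge)
    finally show ?thesis by blast
  next
    case False
    then have "1 - \<epsilon> \<le> (\<Sum>g\<in>excursion_walks x (Suc j) 0. path_weight g)"
      using sum_nonneg[of "excursion_walks x (Suc j) 0" path_weight] path_weight_nonneg by auto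
    then show ?thesis by blast
  qed
qed

end

locale chain_process = graph_chain adj p for adj :: "'a \<Rightarrow> 'a \<Rightarrow> bool" and p +
  fixes M :: "'w measure" and Z :: "nat \<Rightarrow> 'w \<Rightarrow> 'a" and x0 :: 'a
  assumes prob_space_M: "prob_space M"
    and measurable_Z: "Z i \<in> measurable M (count_space UNIV)"
    and finite_dim_distr: "measure M {\<omega> \<in> space M. \<forall>i\<le>n. Z i \<omega> = f i}
      = (if f 0 = x0 then \<Prod>i<n. p (f i) (f (Suc i)) else 0)"
begin

sublocale P: prob_space M by (rule prob_space_M)

definition cylinder :: "'a list \<Rightarrow> 'w set" where
  "cylinder g = {\<omega> \<in> space M. \<forall>i<length g. Z i \<omega> = g ! i}"

lemma sets_cylinder: "cylinder g \<in> sets M"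
proof -
  have "cylinder g = {\<omega> \<in> space M. \<forall>i\<in>{..<length g}. Z i \<omega> = g ! i}"
    by (auto simp: cylinder_def)
  also have "\<dots> \<in> sets M"
  proof (rule sets.sets_Collect_finite_All)
    fix i
    have "{\<omega> \<in> space M. Z i \<omega> = g ! i} = Z i -` {g ! i} \<inter> space M" by auto
    also have "\<dots> \<in> sets M" by (rule measurable_sets[OF measurable_Z]) simp
    finally show "{\<omega> \<in> space M. Z i \<omega> = g ! i} \<in> sets M" .
  qed simp
  finally show ?thesis .
qed

lemma sets_UN_cylinder: "countable S \<Longrightarrow> (\<Union>g\<in>S. cylinder g) \<in> sets M"
  by (intro sets.countable_UN'') (auto intro: sets_cylinder)

lemma sets_UN_UN_cylinder:
  fixes S :: "nat \<Rightarrow> 'a list set"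
  assumes "\<And>n. finite (S n)"
  shows "(\<Union>n. \<Union>g\<in>S n. cylinder g) \<in> sets M"
  by (intro sets.countable_UN'' sets_cylinder countableI_type) (auto intro: countable_finite assms)

lemma measure_cylinder:
  assumes "g \<noteq> []" "hd g = x0"
  shows "measure M (cylinder g) = path_weight g"
proof -
  have "cylinder g = {\<omega> \<in> space M. \<forall>i\<le>length g - 1. Z i \<omega> = g ! i}"
    unfolding cylinder_def using assms(1) by (cases g) (auto simp: less_Suc_eq_le)
  moreover have "g ! 0 = x0" using assms by (simp add: hd_conv_nth)
  ultimately show ?thesis
    using finite_dim_distr[of "length g - 1" "\<lambda>i. g ! i"] path_weight_eq_prod[OF assms(1)] by simp
qed

lemma cylinder_eq: "\<omega> \<in> cylinder g \<Longrightarrow> \<omega> \<in> cylinder g' \<Longrightarrow> length g = length g' \<Longrightarrow> g = g'"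
  by (auto simp: cylinder_def intro: nth_equalityI)

lemma return_time_cylinder:
  "excursions x j g \<Longrightarrow> \<omega> \<in> cylinder g \<Longrightarrow> return_time (\<lambda>i. Z i \<omega>) x j = length g - 1"
  by (rule return_time_excursions) (auto simp: cylinder_def)

lemma measure_UN_cylinder:
  assumes "finite S" and "\<And>g. g \<in> S \<Longrightarrow> g \<noteq> [] \<and> hd g = x0"
    and "\<And>g g' \<omega>. g \<in> S \<Longrightarrow> g' \<in> S \<Longrightarrow> \<omega> \<in> cylinder g \<Longrightarrow> \<omega> \<in> cylinder g' \<Longrightarrow> g = g'"
  shows "measure M (\<Union>g\<in>S. cylinder g) = (\<Sum>g\<in>S. path_weight g)"
proof -
  have "measure M (\<Union>g\<in>S. cylinder g) = (\<Sum>g\<in>S. measure M (cylinder g))"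
    using assms(1,3) sets_cylinder
    by (intro P.finite_measure_finite_Union) (auto simp: disjoint_family_on_def)
  also have "\<dots> = (\<Sum>g\<in>S. path_weight g)"
    using assms(2) measure_cylinder by (intro sum.cong) auto
  finally show ?thesis .
qed

lemma measure_UN_excursion_cylinder:
  assumes "S \<subseteq> excursion_walks x0 j n"
  shows "measure M (\<Union>g\<in>S. cylinder g) = (\<Sum>g\<in>S. path_weight g)"
proof (rule measure_UN_cylinder)
  show "finite S" using assms finite_excursion_walks by (rule finite_subset)
  show "g \<noteq> [] \<and> hd g = x0" if "g \<in> S" for g
  proof -
    have "excursions x0 j g" using subsetD[OF assms that] by (simp add: excursion_walks_def)
    from excursions_hd_last[OF this] show ?thesis by simp
  qed
  fix g g' \<omega> assume g: "g \<in> S" "g' \<in> S" and \<omega>: "\<omega> \<in> cylinder g" "\<omega> \<in> cylinder g'"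
  have ex: "excursions x0 j g" "excursions x0 j g'"
    using subsetD[OF assms g(1)] subsetD[OF assms g(2)] by (simp_all add: excursion_walks_def)
  have "length g - 1 = length g' - 1"
    using return_time_cylinder[OF ex(1) \<omega>(1)] return_time_cylinder[OF ex(2) \<omega>(2)] by simp
  moreover have "0 < length g" "0 < length g'"
    using excursions_hd_last[OF ex(1)] excursions_hd_last[OF ex(2)] by simp_all
  ultimately have "length g = length g'" by linarith
  then show "g = g'" by (rule cylinder_eq[OF \<omega>])
qed

lemma AE_walk_cylinder: "AE \<omega> in M. \<forall>m. \<exists>g\<in>walks_upto x0 m. length g = Suc m \<and> \<omega> \<in> cylinder g"
proof (rule AE_all_countable[THEN iffD2], rule allI)
  fix m
  define S where "S = {g \<in> walks_upto x0 m. length g = Suc m}"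
  have "measure M (\<Union>g\<in>S. cylinder g) = (\<Sum>g\<in>S. path_weight g)"
    using cylinder_eq walks_upto_hd
    by (intro measure_UN_cylinder) (auto simp: S_def finite_walks_upto_Collect)
  also have "\<dots> = 1" using walk_sum_length_eq[of x0 m] by (simp add: S_def walk_sum_def)
  finally have "AE \<omega> in M. \<omega> \<in> (\<Union>g\<in>S. cylinder g)"
    by (intro P.AE_prob_1)
  then show "AE \<omega> in M. \<exists>g\<in>walks_upto x0 m. length g = Suc m \<and> \<omega> \<in> cylinder g"
    by (auto simp: S_def)
qed

lemma AE_first_excursion_cylinder:
  assumes recurrent: "AE \<omega> in M. \<exists>n>0. Z n \<omega> = x0"
  shows "AE \<omega> in M. \<exists>n. \<exists>g\<in>excursion_walks x0 (Suc 0) n. \<omega> \<in> cylinder g"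
  using recurrent AE_walk_cylinder
proof eventually_elim
  case (elim \<omega>)
  define m where "m = (LEAST n. 0 < n \<and> Z n \<omega> = x0)"
  have m: "0 < m" "Z m \<omega> = x0" using LeastI_ex[OF elim(1)] by (auto simp: m_def)
  have before: "Z i \<omega> \<noteq> x0" if "0 < i" "i < m" for i
    using not_less_Least[of i "\<lambda>n. 0 < n \<and> Z n \<omega> = x0"] that by (auto simp: m_def)
  obtain g where g: "g \<in> walks_upto x0 m" "length g = Suc m" "\<omega> \<in> cylinder g"
    using elim(2) by blast
  have nth: "g ! i = Z i \<omega>" if "i \<le> m" for i using g(2,3) that by (auto simp: cylinder_def)
  have "excursion x0 g"
    unfolding excursion_def
  proof (intro conjI)
    show "2 \<le> length g" "hd g = x0" using g(1,2) m(1) walks_upto_hd by auto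
    show "last g = x0" using g(2) nth[of m] m(2) by (subst last_conv_nth) auto
    show "x0 \<notin> set (butlast (tl g))"
      using g(2) nth before by (auto simp: in_set_conv_nth nth_butlast nth_tl)
  qed
  then have "g \<in> excursion_walks x0 (Suc 0) m" using g(1) by (simp add: excursion_walks_def)
  then show ?case using g(3) by auto
qed

lemma excursion_cylinders_tendsto:
  "(\<lambda>n. \<Sum>g\<in>{g \<in> excursion_walks x0 j n. P g}. path_weight g)
     \<longlonglongrightarrow> measure M (\<Union>n. \<Union>g\<in>{g \<in> excursion_walks x0 j n. P g}. cylinder g)"
proof -
  define U where "U n = (\<Union>g\<in>{g \<in> excursion_walks x0 j n. P g}. cylinder g)" for n
  have "range U \<subseteq> sets M"
    using finite_excursion_walks by (auto simp: U_def intro!: sets_UN_cylinder countable_finite)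
  moreover have "incseq U"
    using excursion_walks_mono unfolding U_def incseq_def by blast
  ultimately have "(\<lambda>n. measure M (U n)) \<longlonglongrightarrow> measure M (\<Union>n. U n)"
    by (rule P.finite_Lim_measure_incseq)
  moreover have "measure M (U n) = (\<Sum>g\<in>{g \<in> excursion_walks x0 j n. P g}. path_weight g)" for n
    unfolding U_def by (rule measure_UN_excursion_cylinder) auto
  ultimately show ?thesis by (simp add: U_def)
qed

lemma first_excursion_tendsto_1:
  assumes recurrent: "AE \<omega> in M. \<exists>n>0. Z n \<omega> = x0"
  shows "(\<lambda>n. walk_sum x0 n (excursion x0)) \<longlonglongrightarrow> 1"
proof -
  define U where "U = (\<Union>n. \<Union>g\<in>{g \<in> excursion_walks x0 (Suc 0) n. True}. cylinder g)"
  have "U \<in> sets M"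
    unfolding U_def by (rule sets_UN_UN_cylinder) (simp add: finite_excursion_walks)
  moreover have "AE \<omega> in M. \<omega> \<in> U"
    using AE_first_excursion_cylinder[OF recurrent] by (auto simp: U_def)
  ultimately have "measure M U = 1" by (simp add: P.prob_eq_1)
  then show ?thesis
    using excursion_cylinders_tendsto[of "Suc 0" "\<lambda>_. True"]
    by (simp add: U_def walk_sum_def excursion_walks_def)
qed

lemma AE_excursions_cylinder:
  assumes recurrent: "AE \<omega> in M. \<exists>n>0. Z n \<omega> = x0"
  shows "AE \<omega> in M. \<exists>n. \<exists>g\<in>excursion_walks x0 k n. \<omega> \<in> cylinder g"
proof -
  define Y where "Y = (\<Union>n. \<Union>g\<in>excursion_walks x0 k n. cylinder g)"
  have Y: "Y \<in> sets M"
    unfolding Y_def by (rule sets_UN_UN_cylinder) (rule finite_excursion_walks)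
  have approx: "1 - \<epsilon> \<le> measure M Y" if eps: "0 < \<epsilon>" for \<epsilon>
  proof -
    obtain n where "1 - \<epsilon> \<le> (\<Sum>g\<in>excursion_walks x0 k n. path_weight g)"
      using excursion_walks_weight_approx_1[OF first_excursion_tendsto_1[OF recurrent] eps] by blast
    also have "\<dots> = measure M (\<Union>g\<in>excursion_walks x0 k n. cylinder g)"
      by (rule measure_UN_excursion_cylinder[symmetric]) (rule order_refl)
    also have "\<dots> \<le> measure M Y"
      using Y by (intro P.finite_measure_mono) (auto simp: Y_def)
    finally show ?thesis .
  qed
  have "1 \<le> measure M Y"
    by (rule field_le_epsilon) (use approx in \<open>simp add: algebra_simps\<close>)
  then have "measure M Y = 1" by (rule antisym[OF P.prob_le_1])
  then show ?thesis using Y by (simp add: P.prob_eq_1 Y_def)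
qed

lemma small_range_prob_le:
  assumes recurrent: "AE \<omega> in M. \<exists>n>0. Z n \<omega> = x0" and "q \<le> 2"
    and escape: "\<And>n R. finite R \<Longrightarrow> x0 \<in> R \<Longrightarrow> real (card R) \<le> m \<Longrightarrow>
      walk_sum x0 n (\<lambda>e. excursion x0 e \<and> set e \<subseteq> R) \<le> 1 - q"
  shows "measure M {\<omega> \<in> space M. real (card ((\<lambda>i. Z i \<omega>) ` {0..return_time (\<lambda>i. Z i \<omega>) x0 k})) \<le> m}
           \<le> range_potential m q 1 k"
proof -
  define U where "U = (\<Union>n. \<Union>g\<in>{g \<in> excursion_walks x0 k n. real (card (set g)) \<le> m}. cylinder g)"
  have "U \<in> sets M"
    unfolding U_def by (rule sets_UN_UN_cylinder) (simp add: finite_excursion_walks)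
  have "AE \<omega> in M. real (card ((\<lambda>i. Z i \<omega>) ` {0..return_time (\<lambda>i. Z i \<omega>) x0 k})) \<le> m \<longrightarrow> \<omega> \<in> U"
    using AE_excursions_cylinder[OF recurrent, of k]
  proof eventually_elim
    case (elim \<omega>)
    then obtain n g where g: "g \<in> excursion_walks x0 k n" "\<omega> \<in> cylinder g" by blast
    then have ex: "excursions x0 k g" by (simp add: excursion_walks_def)
    then have "g \<noteq> []" using excursions_hd_last[OF ex] by simp
    then have "(\<lambda>i. Z i \<omega>) ` {0..return_time (\<lambda>i. Z i \<omega>) x0 k} = set g"
      using return_time_cylinder[OF ex g(2)] g(2)
      by (auto simp: cylinder_def set_conv_nth image_iff less_Suc_eq_le[symmetric])
    then show ?case using g by (auto simp: U_def)
  qed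
  then have "measure M {\<omega> \<in> space M.
        real (card ((\<lambda>i. Z i \<omega>) ` {0..return_time (\<lambda>i. Z i \<omega>) x0 k})) \<le> m} \<le> measure M U"
    using \<open>U \<in> sets M\<close> by (intro P.finite_measure_mono_AE) auto
  also have "\<dots> \<le> range_potential m q 1 k"
  proof (rule LIMSEQ_le_const2)
    show "(\<lambda>n. \<Sum>g\<in>{g \<in> excursion_walks x0 k n. real (card (set g)) \<le> m}. path_weight g)
        \<longlonglongrightarrow> measure M U"
      unfolding U_def by (rule excursion_cylinders_tendsto)
    show "\<exists>N. \<forall>n\<ge>N. (\<Sum>g\<in>{g \<in> excursion_walks x0 k n. real (card (set g)) \<le> m}. path_weight g)
        \<le> range_potential m q 1 k"
      using small_range_weight_le[where m = m, OF assms(2) escape] by blast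
  qed
  finally show ?thesis .
qed

end

locale homesick_graph =
  fixes adj :: "'a \<Rightarrow> 'a \<Rightarrow> bool" and o' :: 'a and lam :: real
  assumes simple: "simple_graph adj" and loc_fin: "locally_finite adj"
    and connected: "graph_connected adj"
    and lam_gt_1: "1 < lam" and root_degree_pos: "0 < gdeg adj o'"
begin

abbreviation depth :: "'a \<Rightarrow> nat" where "depth \<equiv> gdist adj o'"

lemma relpowp_depth: "(adj ^^ depth v) o' v"
proof -
  have "\<exists>n. (adj ^^ n) o' v"
    using connected unfolding graph_connected_def rtranclp_power by blast
  then show ?thesis unfolding gdist_def by (rule LeastI_ex)
qed

lemma depth_le: "(adj ^^ n) o' v \<Longrightarrow> depth v \<le> n"
  unfolding gdist_def by (rule Least_le)

lemma depth_root: "depth o' = 0"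
  using depth_le[of 0 o'] by simp

lemma depth_eq_0: "depth v = 0 \<Longrightarrow> v = o'"
  using relpowp_depth[of v] by simp

lemma depth_adj_le: "adj v w \<Longrightarrow> depth w \<le> Suc (depth v)"
  using depth_le relpowp_Suc_I[OF relpowp_depth] by blast

lemma depth_Suc_parent:
  assumes "depth v = Suc n"
  shows "\<exists>y. adj y v \<and> depth y = n"
proof -
  obtain y where y: "(adj ^^ n) o' y" "adj y v"
    using relpowp_depth[of v] assms by (auto elim: relpowp_Suc_E)
  then have "depth y \<le> n" "depth v \<le> Suc (depth y)" using depth_le depth_adj_le by auto
  then show ?thesis using y assms by (intro exI[of _ y]) auto
qed

definition down :: "'a \<Rightarrow> 'a set" where
  "down v = {u. adj v u \<and> depth u + 1 = depth v}"

definition homesick_denom :: "'a \<Rightarrow> real" where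
  "homesick_denom v = lam * real (card (down v)) + real (card {w. adj v w} - card (down v))"

definition homesick_mu :: "'a \<Rightarrow> real" where
  "homesick_mu v = homesick_denom v / lam ^ depth v"

lemma down_subset: "down v \<subseteq> {w. adj v w}"
  unfolding down_def by blast

lemma homesick_p_eq:
  "homesick_p adj o' lam v w
     = (if adj v w then (if w \<in> down v then lam else 1) / homesick_denom v else 0)"
  unfolding homesick_p_def homesick_denom_def down_def Let_def by simp

lemma homesick_denom_pos: "0 < homesick_denom v"
proof -
  have "{w. adj v w} \<noteq> {}"
  proof (cases "depth v")
    case 0
    then have "v = o'" by (rule depth_eq_0)
    then show ?thesis using root_degree_pos unfolding gdeg_def by (metis card.empty less_irrefl)
  next
    case (Suc n)
    then obtain y where "adj y v" using depth_Suc_parent by blast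
    then show ?thesis using simple unfolding simple_graph_def by blast
  qed
  moreover have finite: "finite {w. adj v w}" using loc_fin by (simp add: locally_finite_def)
  ultimately have "0 < card {w. adj v w}" by (simp add: card_gt_0_iff)
  moreover have "card (down v) \<le> card {w. adj v w}"
    using card_mono[OF finite down_subset] .
  ultimately show ?thesis
    using lam_gt_1 by (cases "card (down v) = 0") (auto simp: homesick_denom_def add_pos_nonneg)
qed

lemma homesick_p_sum: "(\<Sum>w | adj v w. homesick_p adj o' lam v w) = 1"
proof -
  have "(\<Sum>w | adj v w. homesick_p adj o' lam v w)
      = (\<Sum>w | adj v w. if w \<in> down v then lam else 1) / homesick_denom v"
    by (simp add: homesick_p_eq sum_divide_distrib)
  also have "(\<Sum>w | adj v w. if w \<in> down v then lam else 1)
      = lam * real (card (down v)) + real (card ({w. adj v w} - down v))"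
    using down_subset[of v] loc_fin[unfolded locally_finite_def]
    by (simp add: sum.If_cases Int_absorb1 Diff_eq[symmetric])
  also have "\<dots> = homesick_denom v"
    using card_Diff_subset[OF finite_subset[OF down_subset] down_subset] loc_fin
    by (simp add: homesick_denom_def locally_finite_def)
  finally show ?thesis using homesick_denom_pos[of v] by simp
qed

lemma homesick_mu_p:
  assumes "adj v w"
  shows "homesick_mu v * homesick_p adj o' lam v w = 1 / lam ^ min (depth v) (depth w)"
proof -
  have "adj w v" using assms simple unfolding simple_graph_def by blast
  then have "depth w \<le> Suc (depth v)" "depth v \<le> Suc (depth w)" using assms depth_adj_le by auto
  moreover have eq: "homesick_mu v * homesick_p adj o' lam v w
      = (if w \<in> down v then lam else 1) / lam ^ depth v"
    using assms homesick_denom_pos[of v] by (simp add: homesick_mu_def homesick_p_eq)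
  ultimately show ?thesis
  proof (cases "w \<in> down v")
    case True
    then have "depth v = Suc (depth w)" by (simp add: down_def)
    then show ?thesis using eq True lam_gt_1 by (simp add: min_def)
  next
    case False
    then have "depth v \<le> depth w" using \<open>depth v \<le> Suc (depth w)\<close> assms by (auto simp: down_def)
    then show ?thesis using eq False by (simp add: min_def)
  qed
qed

sublocale reversible_chain adj "homesick_p adj o' lam" homesick_mu
proof
  show "simple_graph adj" "locally_finite adj" by (rule simple, rule loc_fin)
  show "0 \<le> homesick_p adj o' lam v w" for v w
    using homesick_denom_pos[of v] lam_gt_1 by (simp add: homesick_p_eq)
  show "0 < homesick_p adj o' lam v w" if "adj v w" for v w
    using homesick_denom_pos[of v] lam_gt_1 that by (simp add: homesick_p_eq)
  show "(\<Sum>w | adj v w. homesick_p adj o' lam v w) = 1" for v by (rule homesick_p_sum)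
  show "0 < homesick_mu v" for v
    using homesick_denom_pos[of v] lam_gt_1 by (simp add: homesick_mu_def)
  show "homesick_mu v * homesick_p adj o' lam v w = homesick_mu w * homesick_p adj o' lam w v"
    for v w
  proof (cases "adj v w")
    case True
    then have "adj w v" using simple unfolding simple_graph_def by blast
    then show ?thesis using True by (simp add: homesick_mu_p min.commute)
  next
    case False
    then have "\<not> adj w v" using simple unfolding simple_graph_def by blast
    then show ?thesis using False by (simp add: homesick_p_eq)
  qed
qed

lemma homesick_mu_root: "homesick_mu o' = real (gdeg adj o')"
  by (simp add: homesick_mu_def homesick_denom_def down_def depth_root gdeg_def)

lemma green_root_le: "green u o' o' n \<le> real (gdeg adj o') * (\<Sum>i<depth u. lam ^ i)"
proof (induction "depth u" arbitrary: u)
  case 0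
  then have "u = o'" by (simp add: depth_eq_0)
  then have "green u o' o' n = 0"
    unfolding green_def by (intro walk_sum_eq_0) (auto dest: walks_upto_hd)
  then show ?case by (simp flip: 0)
next
  case (Suc D)
  obtain y where y: "adj y u" "depth y = D" using depth_Suc_parent Suc.hyps by metis
  have "homesick_mu y * homesick_p adj o' lam y u = 1 / lam ^ D"
    using homesick_mu_p[OF y(1)] y(2) Suc.hyps by simp
  have "0 \<le> homesick_mu o' / homesick_mu y" using mu_pos[of o'] mu_pos[of y] by simp
  then have "homesick_mu o' / homesick_mu y * green u y y n
      \<le> homesick_mu o' / homesick_mu y * (1 / homesick_p adj o' lam y u)"
    by (rule mult_left_mono[OF green_neighbour_le[OF y(1)]])
  also have "\<dots> = real (gdeg adj o') * lam ^ D"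
    using \<open>homesick_mu y * homesick_p adj o' lam y u = 1 / lam ^ D\<close> homesick_mu_root by simp
  finally have neighbour:
    "homesick_mu o' / homesick_mu y * green u y y n \<le> real (gdeg adj o') * lam ^ D" .
  have "green u o' o' n \<le> green y o' o' n + homesick_mu o' / homesick_mu y * green u y y n"
    by (rule green_triangle)
  also have "\<dots> \<le> real (gdeg adj o') * (\<Sum>i<D. lam ^ i) + real (gdeg adj o') * lam ^ D"
    using Suc.hyps(1)[of y] y(2) neighbour by (intro add_mono) auto
  also have "\<dots> = real (gdeg adj o') * (\<Sum>i<depth u. lam ^ i)"
    by (simp add: distrib_left Suc.hyps(2)[symmetric])
  finally show ?case .
qed

lemma escape_ball:
  assumes "finite R" "o' \<in> R" "card R < card (ball_graph adj o' r)"
  shows "walk_sum o' n (\<lambda>e. excursion o' e \<and> set e \<subseteq> R)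
           \<le> 1 - (lam - 1) / (real (gdeg adj o') * lam powr r)"
proof -
  obtain u where u: "u \<in> ball_graph adj o' r" "u \<notin> R"
    using card_mono[OF assms(1), of "ball_graph adj o' r"] assms(3) by (metis not_le subsetI)
  then have "u \<noteq> o'" "real (depth u) \<le> r" using assms(2) by (auto simp: ball_graph_def)
  have "(\<Sum>i<depth u. lam ^ i) = (lam ^ depth u - 1) / (lam - 1)"
    using lam_gt_1 by (simp add: sum_gp_strict field_simps)
  also have "\<dots> \<le> lam powr r / (lam - 1)"
  proof -
    have "lam ^ depth u = lam powr real (depth u)" using lam_gt_1 by (simp add: powr_realpow)
    also have "\<dots> \<le> lam powr r" using lam_gt_1 \<open>real (depth u) \<le> r\<close> by (intro powr_mono) auto
    finally show ?thesis using lam_gt_1 by (intro divide_right_mono) auto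
  qed
  finally have "real (gdeg adj o') * (\<Sum>i<depth u. lam ^ i)
      \<le> real (gdeg adj o') * (lam powr r / (lam - 1))"
    by (rule mult_left_mono) simp
  then have "green u o' o' N \<le> real (gdeg adj o') * lam powr r / (lam - 1)" for N
    using green_root_le[of u N] by simp
  then have avoid: "walk_sum o' n (\<lambda>e. excursion o' e \<and> u \<notin> set e)
      \<le> 1 - 1 / (real (gdeg adj o') * lam powr r / (lam - 1))"
    by (rule walk_sum_excursion_avoiding_le[OF \<open>u \<noteq> o'\<close>])
  have "walk_sum o' n (\<lambda>e. excursion o' e \<and> set e \<subseteq> R)
      \<le> walk_sum o' n (\<lambda>e. excursion o' e \<and> u \<notin> set e)"
    using u(2) by (intro walk_sum_mono) auto
  also have "\<dots> \<le> 1 - (lam - 1) / (real (gdeg adj o') * lam powr r)"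
    using avoid by (simp only: divide_divide_eq_right mult_1_left)
  finally show ?thesis .
qed

lemma chain_process_homesick:
  "is_homesick_walk M adj o' lam Z \<Longrightarrow> chain_process adj (homesick_p adj o' lam) M Z o'"
  by (rule chain_process.intro[OF graph_chain_axioms])
    (simp add: chain_process_axioms_def is_homesick_walk_def)

end

lemma powr_ln_ratio:
  fixes b x c :: real
  assumes "1 < b" "0 < x"
  shows "b powr (c * ln x / ln b) = x powr c"
  using assms by (simp add: powr_def)

lemma le_powr_of_powr_inverse_le:
  fixes x y c :: real
  assumes "0 < c" "0 < x" "x powr (1 / c) \<le> y"
  shows "x \<le> y powr c"
proof -
  have "(x powr (1 / c)) powr c \<le> y powr c" using assms by (intro powr_mono2) auto
  then show ?thesis using assms by (simp add: powr_powr)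
qed

locale homesick_walk = homesick_graph adj o' lam
  for adj :: "'a \<Rightarrow> 'a \<Rightarrow> bool" and o' lam +
  fixes M :: "'w measure" and Z :: "nat \<Rightarrow> 'w \<Rightarrow> 'a"
  assumes walk: "is_homesick_walk M adj o' lam Z"
begin

sublocale chain_process adj "homesick_p adj o' lam" M Z o'
  by (rule chain_process_homesick[OF walk])

lemma small_range_prob_le_exp:
  assumes recurrent: "AE \<omega> in M. \<exists>n>0. Z n \<omega> = o'"
    and "0 < c" "0 < k" and k: "(5 * (lam - 1) / real (gdeg adj o')) powr (1 / c) \<le> real k"
    and N_ball: "N \<le> card (ball_graph adj o' (c * ln (real k) / ln lam))"
    and N_le: "real N \<le> (lam - 1) / real (gdeg adj o') * real k powr (1 - c)"
  shows "measure M {\<omega> \<in> space M.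
            real (card ((\<lambda>i. Z i \<omega>) ` {0..return_time (\<lambda>i. Z i \<omega>) o' k})) \<le> real N / 4}
           \<le> exp (- real N / 8)"
proof -
  define deg where "deg = real (gdeg adj o')"
  define q where "q = (lam - 1) / (deg * real k powr c)"
  have "0 < deg" using root_degree_pos by (simp add: deg_def)
  have "5 * (lam - 1) / deg \<le> real k powr c"
    using le_powr_of_powr_inverse_le[OF \<open>0 < c\<close> _ k] lam_gt_1 \<open>0 < deg\<close> by (simp add: deg_def)
  then have "q \<le> 1 / 5"
    using lam_gt_1 \<open>0 < deg\<close> by (simp add: q_def field_simps)
  have "real N \<le> real k * q"
    using N_le \<open>0 < k\<close> by (simp add: q_def deg_def powr_diff field_simps)
  have escape: "walk_sum o' n (\<lambda>e. excursion o' e \<and> set e \<subseteq> R) \<le> 1 - q"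
    if "finite R" "o' \<in> R" "real (card R) \<le> real N / 4" for n R
  proof -
    have "0 < card R" using that(1,2) card_gt_0_iff by blast
    then have "card R < card (ball_graph adj o' (c * ln (real k) / ln lam))"
      using that(3) N_ball by linarith
    then have "walk_sum o' n (\<lambda>e. excursion o' e \<and> set e \<subseteq> R)
        \<le> 1 - (lam - 1) / (deg * lam powr (c * ln (real k) / ln lam))"
      unfolding deg_def by (rule escape_ball[OF that(1,2)])
    then show ?thesis
      using powr_ln_ratio[OF lam_gt_1, of "real k" c] \<open>0 < k\<close> by (simp add: q_def)
  qed
  have "measure M {\<omega> \<in> space M.
          real (card ((\<lambda>i. Z i \<omega>) ` {0..return_time (\<lambda>i. Z i \<omega>) o' k})) \<le> real N / 4}
      \<le> range_potential (real N / 4) q 1 k"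
    using \<open>q \<le> 1 / 5\<close> by (intro small_range_prob_le[OF recurrent _ escape]) auto
  also have "\<dots> \<le> exp (- real N / 8)"
    using \<open>q \<le> 1 / 5\<close> \<open>real N \<le> real k * q\<close> by (intro range_potential_le_exp) auto
  finally show ?thesis .
qed

end

theorem proposition4p2:
  fixes M :: "'w measure" and adj :: "'a \<Rightarrow> 'a \<Rightarrow> bool" and o' :: 'a
    and lam c :: real and k :: nat and Z :: "nat \<Rightarrow> 'w \<Rightarrow> 'a"
  assumes "simple_graph adj" and "locally_finite adj" and "graph_connected adj"
    and "lam > 1"
    and walk: "is_homesick_walk M adj o' lam Z"
    and recurrent: "AE \<omega> in M. \<exists>n>0. Z n \<omega> = o'"
    and "0 < c" and "c < 1"
    and "real k \<ge> (5 * (lam - 1) / real (gdeg adj o')) powr (1 / c)"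
  shows "let N = min (card (ball_graph adj o' (c * ln (real k) / ln lam)))
                     (nat \<lfloor>(lam - 1) / real (gdeg adj o') * real k powr (1 - c)\<rfloor>)
         in measure M {\<omega> \<in> space M.
               real (card ((\<lambda>i. Z i \<omega>) ` {0..return_time (\<lambda>i. Z i \<omega>) o' k})) \<le> real N / 4}
            \<le> exp (- real N / 8)"
proof -
  define F where "F = (lam - 1) / real (gdeg adj o') * real k powr (1 - c)"
  define N where "N = min (card (ball_graph adj o' (c * ln (real k) / ln lam))) (nat \<lfloor>F\<rfloor>)"
  have "measure M {\<omega> \<in> space M.
          real (card ((\<lambda>i. Z i \<omega>) ` {0..return_time (\<lambda>i. Z i \<omega>) o' k})) \<le> real N / 4}
        \<le> exp (- real N / 8)"
  proof (cases "N = 0")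
    case True
    then show ?thesis using walk prob_space.prob_le_1 by (simp add: is_homesick_walk_def)
  next
    case False
    then have "1 \<le> F" by (simp add: N_def)
    then have "0 < gdeg adj o'" "0 < k" by (auto simp: F_def intro!: Nat.gr0I)
    interpret homesick_walk adj o' lam M Z
      by unfold_locales (use assms \<open>0 < gdeg adj o'\<close> in simp_all)
    have "real N \<le> real (nat \<lfloor>F\<rfloor>)" by (simp add: N_def)
    also have "\<dots> \<le> F" using \<open>1 \<le> F\<close> by (simp add: of_nat_nat)
    finally have "real N \<le> F" .
    then show ?thesis
      using assms(9) by (intro small_range_prob_le_exp[OF recurrent \<open>0 < c\<close> \<open>0 < k\<close>])
        (simp_all add: N_def F_def)
  qed
  then show ?thesis by (simp add: Let_def N_def F_def)
qed

end
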